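(* Let $Q$ be a QNP, let $P=T_D(Q)$ be its direct translation, and let $\pi$ be a policy for $Q$ (and thus also for $P$). Then $\pi$ is $Q$-terminating if and only if $\pi$ is $P$-terminating.
   Context: A qualitative numerical problem (QNP) is a tuple $Q=\langle F,V,I,O,G\rangle$ where $F$ is a finite set of propositional variables and $V$ a finite set of numerical variables taking non-negative real values. $F$-literals are $p,\neg p$; $V$-literals are $X=0$ and $X>0$. Each action $a\in O$ has a precondition $Pre(a)$ (set of literals), propositional effects $\mathit{Eff}(a)$ (set of $F$-literals) and numerical effects $N(a)$ (atoms $Inc(X)$, $Dec(X)$, at most one per variable); if $Dec(X)\in N(a)$ then $X>0\in Pre(a)$. A state $s$ assigns truth values to $F$ and reals $s[X]\ge0$ to $V$; initial states satisfy $I$ under a closed-world assumption; goal states satisfy $G$. For applicable $a$ (i.e. $s$ satisfies $Pre(a)$), $s'\in F(a,s)$ iff the propositional effects are applied (others unchanged), $s'[X]>s[X]$ if $Inc(X)\in N(a)$, $s'[X]<s[X]$ if $Dec(X)\in N(a)$, $s'[X]=s[X]$ otherwise. A trajectory is a sequence $s_0,a_0,s_1,\dots$ with $s_0$ initial, $a_i$ applicable, $s_{i+1}\in F(a_i,s_i)$, that for some $\epsilon>0$ satisfies: for all $X,i$, $s_{i+1}[X]\ne s_i[X]$ implies $|s_{i+1}[X]-s_i[X]|\ge\epsilon$ or $0=s_{i+1}[X]<s_i[X]<\epsilon$. The boolean state $\bar s$ is the truth valuation on atoms $p\in F$ and $X=0$. A policy is a partial map $\pi$ from states to actions with $\pi(s)=\pi(s')$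 when $\bar s=\bar s'$; a $\pi$-trajectory has $a_i=\pi(s_i)$. $\pi$ is $Q$-terminating iff all $\pi$-trajectories of $Q$ are finite. $T_D(Q)$ is the FOND problem over $F\cup\{p_{X=0}:X\in V\}$ obtained by reading $X=0$ as $p_{X=0}$, $X>0$ as $\neg p_{X=0}$ in $I$, $G$, preconditions, keeping propositional effects, replacing $Inc(X)$ by the deterministic effect $\neg p_{X=0}$ and $Dec(X)$ by the nondeterministic effect $\neg p_{X=0}\mid p_{X=0}$; its states are the boolean states and $\pi$ acts via $\bar s\mapsto\pi(s)$. A $\pi$-trajectory of $T_D(Q)$ is a sequence from its initial state with $\pi(\bar s_i)$ applicable and $\bar s_{i+1}$ a possible successor. $Dec(X)$/$Inc(X)$ actions of $T_D(Q)$ are those coming from actions of $Q$ with $Dec(X)$/$Inc(X)$ in $N(a)$. An infinite $\pi$-trajectory of $T_D(Q)$ is terminating if there is $X\in V$ such that $\pi(\bar s)$ is a $Dec(X)$ action for some state $\bar s$ occurring infinitely often and $\pi(\bar s')$ is not an $Inc(X)$ action for any state $\bar s'$ occurring infinitely often. $\pi$ is $P$-terminating iff all infinite $\pi$-trajectories of $P=T_D(Q)$ are terminating. *)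

theory Defs
  imports Complex_Main "HOL-Library.Infinite_Set"
begin

text \<open>Propositional variables F are the (finite) type 'f, numerical variables V are the
(finite) type 'v, actions have type 'a; the action set O is a set of actions.\<close>

datatype ('f, 'v) lit = Atom 'f | NegAtom 'f | Eq0 'v | Gt0 'v

datatype 'v neff = Inc 'v | Dec 'v

record ('f, 'v, 'a) qnp =
  qI   :: "('f, 'v) lit set"
  qO   :: "'a set"
  qG   :: "('f, 'v) lit set"
  qPre :: "'a \<Rightarrow> ('f, 'v) lit set"
  qEff :: "'a \<Rightarrow> ('f \<times> bool) set"   \<comment> \<open>(p,True) is p, (p,False) is \<not>p\<close>
  qN   :: "'a \<Rightarrow> 'v neff set"

definition wf_qnp :: "('f, 'v, 'a) qnp \<Rightarrow> bool" where
  "wf_qnp Q \<longleftrightarrow>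
     (\<forall>a \<in> qO Q. \<forall>X. \<not> (Inc X \<in> qN Q a \<and> Dec X \<in> qN Q a)) \<and>
     (\<forall>a \<in> qO Q. \<forall>X. Dec X \<in> qN Q a \<longrightarrow> Gt0 X \<in> qPre Q a)"

type_synonym ('f, 'v) qstate = "('f \<Rightarrow> bool) \<times> ('v \<Rightarrow> real)"

fun holds :: "('f, 'v) qstate \<Rightarrow> ('f, 'v) lit \<Rightarrow> bool" where
  "holds s (Atom p) = fst s p"
| "holds s (NegAtom p) = (\<not> fst s p)"
| "holds s (Eq0 X) = (snd s X = 0)"
| "holds s (Gt0 X) = (snd s X > 0)"

definition sat :: "('f, 'v) qstate \<Rightarrow> ('f, 'v) lit set \<Rightarrow> bool" where
  "sat s L \<longleftrightarrow> (\<forall>l \<in> L. holds s l)"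

definition valid_state :: "('f, 'v) qstate \<Rightarrow> bool" where
  "valid_state s \<longleftrightarrow> (\<forall>X. snd s X \<ge> 0)"

text \<open>Initial states: closed-world reading of I on the boolean atoms p and X=0.\<close>
definition q_init :: "('f, 'v, 'a) qnp \<Rightarrow> ('f, 'v) qstate \<Rightarrow> bool" where
  "q_init Q s \<longleftrightarrow> valid_state s \<and>
     (\<forall>p. fst s p \<longleftrightarrow> Atom p \<in> qI Q) \<and> (\<forall>X. snd s X = 0 \<longleftrightarrow> Eq0 X \<in> qI Q)"

definition q_applicable :: "('f, 'v, 'a) qnp \<Rightarrow> 'a \<Rightarrow> ('f, 'v) qstate \<Rightarrow> bool" where
  "q_applicable Q a s \<longleftrightarrow> a \<in> qO Q \<and> sat s (qPre Q a)"

definition apply_peff :: "('f \<times> bool) set \<Rightarrow> ('f \<Rightarrow> bool) \<Rightarrow> 'f \<Rightarrow> bool" where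
  "apply_peff E v p = (if (p, True) \<in> E then True else if (p, False) \<in> E then False else v p)"

definition q_succ :: "('f, 'v, 'a) qnp \<Rightarrow> 'a \<Rightarrow> ('f, 'v) qstate \<Rightarrow> ('f, 'v) qstate \<Rightarrow> bool" where
  "q_succ Q a s s' \<longleftrightarrow> valid_state s' \<and>
     fst s' = apply_peff (qEff Q a) (fst s) \<and>
     (\<forall>X. (Inc X \<in> qN Q a \<longrightarrow> snd s' X > snd s X) \<and>
          (Dec X \<in> qN Q a \<longrightarrow> snd s' X < snd s X) \<and>
          (Inc X \<notin> qN Q a \<and> Dec X \<notin> qN Q a \<longrightarrow> snd s' X = snd s X))"

text \<open>Atoms of T_D(Q): Inl p for p \<in> F, Inr X for p_{X=0}.\<close>
type_synonym ('f, 'v) bstate = "'f + 'v \<Rightarrow> bool"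

definition bar :: "('f, 'v) qstate \<Rightarrow> ('f, 'v) bstate" where
  "bar s = (\<lambda>x. case x of Inl p \<Rightarrow> fst s p | Inr X \<Rightarrow> snd s X = 0)"

text \<open>A policy is a partial map on boolean states; on Q it acts as s \<mapsto> \<pi>(bar s), which
is exactly a partial map on states with \<pi>(s)=\<pi>(s') whenever bar s = bar s'.\<close>
type_synonym ('f, 'v, 'a) policy = "('f, 'v) bstate \<Rightarrow> 'a option"

definition q_inf_traj ::
  "('f, 'v, 'a) qnp \<Rightarrow> ('f, 'v, 'a) policy \<Rightarrow> (nat \<Rightarrow> ('f, 'v) qstate) \<Rightarrow> (nat \<Rightarrow> 'a) \<Rightarrow> bool" where
  "q_inf_traj Q \<pi> s a \<longleftrightarrow>
     q_init Q (s 0) \<and>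
     (\<forall>i. \<pi> (bar (s i)) = Some (a i) \<and> q_applicable Q (a i) (s i) \<and>
          q_succ Q (a i) (s i) (s (Suc i))) \<and>
     (\<exists>\<epsilon>::real. \<epsilon> > 0 \<and> (\<forall>X i. snd (s (Suc i)) X \<noteq> snd (s i) X \<longrightarrow>
         \<bar>snd (s (Suc i)) X - snd (s i) X\<bar> \<ge> \<epsilon> \<or>
         (0 = snd (s (Suc i)) X \<and> snd (s (Suc i)) X < snd (s i) X \<and> snd (s i) X < \<epsilon>)))"

definition Q_terminating :: "('f, 'v, 'a) qnp \<Rightarrow> ('f, 'v, 'a) policy \<Rightarrow> bool" where
  "Q_terminating Q \<pi> \<longleftrightarrow> \<not> (\<exists>s a. q_inf_traj Q \<pi> s a)"

text \<open>A FOND action effect assigns to each atom either None (unchanged) or the set of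
possible new truth values ({v}: deterministic; {True,False}: nondeterministic oneof).\<close>
record ('b, 'a) fond =
  fI   :: "('b \<times> bool) set"
  fO   :: "'a set"
  fG   :: "('b \<times> bool) set"
  fPre :: "'a \<Rightarrow> ('b \<times> bool) set"
  fEff :: "'a \<Rightarrow> 'b \<Rightarrow> bool set option"

definition fond_init :: "('b, 'a) fond \<Rightarrow> ('b \<Rightarrow> bool) \<Rightarrow> bool" where
  "fond_init P b \<longleftrightarrow> (\<forall>x. b x \<longleftrightarrow> (x, True) \<in> fI P)"

definition fond_applicable :: "('b, 'a) fond \<Rightarrow> 'a \<Rightarrow> ('b \<Rightarrow> bool) \<Rightarrow> bool" where
  "fond_applicable P a b \<longleftrightarrow> a \<in> fO P \<and> (\<forall>(x, v) \<in> fPre P a. b x = v)"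

definition fond_succ :: "('b, 'a) fond \<Rightarrow> 'a \<Rightarrow> ('b \<Rightarrow> bool) \<Rightarrow> ('b \<Rightarrow> bool) \<Rightarrow> bool" where
  "fond_succ P a b b' \<longleftrightarrow>
     (\<forall>x. case fEff P a x of None \<Rightarrow> b' x = b x | Some S \<Rightarrow> b' x \<in> S)"

fun tr_lit :: "('f, 'v) lit \<Rightarrow> ('f + 'v) \<times> bool" where
  "tr_lit (Atom p) = (Inl p, True)"
| "tr_lit (NegAtom p) = (Inl p, False)"
| "tr_lit (Eq0 X) = (Inr X, True)"
| "tr_lit (Gt0 X) = (Inr X, False)"

definition T_D :: "('f, 'v, 'a) qnp \<Rightarrow> ('f + 'v, 'a) fond" where
  "T_D Q = \<lparr> fI = tr_lit ` qI Q, fO = qO Q, fG = tr_lit ` qG Q,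
             fPre = (\<lambda>a. tr_lit ` qPre Q a),
             fEff = (\<lambda>a x. case x of
                 Inl p \<Rightarrow> (if (p, True) \<in> qEff Q a then Some {True}
                           else if (p, False) \<in> qEff Q a then Some {False} else None)
               | Inr X \<Rightarrow> (if Inc X \<in> qN Q a then Some {False}
                           else if Dec X \<in> qN Q a then Some {True, False} else None)) \<rparr>"

definition fond_inf_traj ::
  "('b, 'a) fond \<Rightarrow> (('b \<Rightarrow> bool) \<Rightarrow> 'a option) \<Rightarrow> (nat \<Rightarrow> 'b \<Rightarrow> bool) \<Rightarrow> bool" where
  "fond_inf_traj P \<pi> b \<longleftrightarrow> fond_init P (b 0) \<and>
     (\<forall>i. \<exists>a. \<pi> (b i) = Some a \<and> fond_applicable P a (b i) \<and> fond_succ P a (b i) (b (Suc i)))"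

definition is_Dec_action :: "('f, 'v, 'a) qnp \<Rightarrow> 'v \<Rightarrow> 'a option \<Rightarrow> bool" where
  "is_Dec_action Q X ao \<longleftrightarrow> (\<exists>a. ao = Some a \<and> Dec X \<in> qN Q a)"

definition is_Inc_action :: "('f, 'v, 'a) qnp \<Rightarrow> 'v \<Rightarrow> 'a option \<Rightarrow> bool" where
  "is_Inc_action Q X ao \<longleftrightarrow> (\<exists>a. ao = Some a \<and> Inc X \<in> qN Q a)"

definition occurs_inf :: "(nat \<Rightarrow> 'b) \<Rightarrow> 'b \<Rightarrow> bool" where
  "occurs_inf b x \<longleftrightarrow> (\<exists>\<^sub>\<infinity> i. b i = x)"

definition terminating_traj ::
  "('f, 'v, 'a) qnp \<Rightarrow> ('f, 'v, 'a) policy \<Rightarrow> (nat \<Rightarrow> ('f, 'v) bstate) \<Rightarrow> bool" where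
  "terminating_traj Q \<pi> b \<longleftrightarrow> (\<exists>X.
     (\<exists>x. occurs_inf b x \<and> is_Dec_action Q X (\<pi> x)) \<and>
     \<not> (\<exists>x'. occurs_inf b x' \<and> is_Inc_action Q X (\<pi> x')))"

definition P_terminating :: "('f, 'v, 'a) qnp \<Rightarrow> ('f, 'v, 'a) policy \<Rightarrow> bool" where
  "P_terminating Q \<pi> \<longleftrightarrow> (\<forall>b. fond_inf_traj (T_D Q) \<pi> b \<longrightarrow> terminating_traj Q \<pi> b)"

end

theory Submission
  imports Defs
begin

text \<open>An infinite Q-trajectory projects to an infinite trajectory of T_D(Q). If that were
terminating for X, then from some point on X is never increased but decreased infinitely often;
by the \<epsilon>-condition each of these decrements except a final one to zero is at least \<epsilon>, which
is impossible for a non-negative quantity. Conversely, an infinite non-terminating trajectory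
of T_D(Q) lifts to Q with natural-number values: every variable that is decreased infinitely often
is also increased infinitely often, so only finitely many decrements ever precede the next
increment, and a counter respecting all qualitative effects exists; then \<epsilon> = 1 works.\<close>

lemma ex_occurs_inf_iff_infinite:
  fixes b :: "nat \<Rightarrow> 'b::finite"
  shows "(\<exists>x. occurs_inf b x \<and> P x) \<longleftrightarrow> infinite {i. P (b i)}"
proof -
  have "{i. P (b i)} = (\<Union>x\<in>{x. P x}. {i. b i = x})" by auto
  then have "infinite {i. P (b i)} \<longleftrightarrow> (\<exists>x\<in>{x. P x}. infinite {i. b i = x})" by simp
  then show ?thesis by (auto simp: occurs_inf_def INFM_iff_infinite)
qed

lemma terminating_traj_iff_actions:
  fixes b :: "nat \<Rightarrow> ('f::finite, 'v::finite) bstate"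
  assumes "\<And>i. \<pi> (b i) = Some (act i)"
  shows "terminating_traj Q \<pi> b \<longleftrightarrow>
    (\<exists>X. infinite {i. Dec X \<in> qN Q (act i)} \<and> finite {i. Inc X \<in> qN Q (act i)})"
  by (simp add: terminating_traj_def ex_occurs_inf_iff_infinite assms
      is_Dec_action_def is_Inc_action_def)

lemma finite_large_decreases:
  fixes f :: "nat \<Rightarrow> real"
  assumes nonneg: "\<And>i. 0 \<le> f i" and antimono: "\<And>i. N \<le> i \<Longrightarrow> f (Suc i) \<le> f i"
    and "0 < \<epsilon>"
  shows "finite {i. N \<le> i \<and> f (Suc i) \<le> f i - \<epsilon>}"
proof (rule ccontr)
  assume "infinite {i. N \<le> i \<and> f (Suc i) \<le> f i - \<epsilon>}"
  then have later_drop: "\<exists>j\<ge>k. N \<le> j \<and> f (Suc j) \<le> f j - \<epsilon>" for k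
    by (simp add: infinite_nat_iff_unbounded_le)
  have le: "f j \<le> f k" if "N \<le> k" "k \<le> j" for j k
    using that antimono by (intro lift_Suc_antimono_le_ivl[of "{N..}" f k j]) auto
  have descent: "\<exists>k\<ge>N. f k \<le> f N - real m * \<epsilon>" for m
  proof (induction m)
    case (Suc m)
    then obtain k where "N \<le> k" "f k \<le> f N - real m * \<epsilon>" by blast
    moreover obtain j where "k \<le> j" "f (Suc j) \<le> f j - \<epsilon>" using later_drop by blast
    ultimately show ?case
      using le[of k j] by (intro exI[of _ "Suc j"]) (auto simp: algebra_simps)
  qed auto
  obtain m where "f N < real m * \<epsilon>" using reals_Archimedean3[OF \<open>0 < \<epsilon>\<close>] by blast
  moreover obtain k where "f k \<le> f N - real m * \<epsilon>" using descent by blast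
  ultimately show False using nonneg[of k] by linarith
qed

lemma finite_decreases:
  fixes f :: "nat \<Rightarrow> real"
  assumes nonneg: "\<And>i. 0 \<le> f i" and antimono: "\<And>i. N \<le> i \<Longrightarrow> f (Suc i) \<le> f i"
    and "0 < \<epsilon>"
    and steps: "\<And>i. f (Suc i) < f i \<Longrightarrow> \<epsilon> \<le> f i - f (Suc i) \<or> f (Suc i) = 0"
  shows "finite {i. f (Suc i) < f i}"
proof (rule ccontr)
  assume inf: "infinite {i. f (Suc i) < f i}"
  have "{i. f (Suc i) < f i} \<subseteq> {..<N} \<union> {i. N \<le> i \<and> f (Suc i) \<le> f i - \<epsilon>}"
  proof safe
    fix i assume "f (Suc i) < f i" "\<not> i < N"
    obtain j where "Suc i \<le> j" "f (Suc j) < f j"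
      using inf by (auto simp: infinite_nat_iff_unbounded_le)
    moreover have "f j \<le> f (Suc i)"
      using \<open>Suc i \<le> j\<close> \<open>\<not> i < N\<close> antimono by (intro lift_Suc_antimono_le_ivl[of "{N..}" f "Suc i" j]) auto
    ultimately have "0 < f (Suc i)" using nonneg[of "Suc j"] by linarith
    then show "f (Suc i) \<le> f i - \<epsilon>" using steps \<open>f (Suc i) < f i\<close> by fastforce
  qed (simp add: not_less)
  with inf finite_large_decreases[of f N \<epsilon>] nonneg antimono \<open>0 < \<epsilon>\<close> show False
    using finite_subset by blast
qed

definition realises_counter ::
  "(nat \<Rightarrow> bool) \<Rightarrow> (nat \<Rightarrow> bool) \<Rightarrow> (nat \<Rightarrow> bool) \<Rightarrow> (nat \<Rightarrow> nat) \<Rightarrow> bool" where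
  "realises_counter zero inc dec v \<longleftrightarrow>
     (\<forall>i. v i = 0 \<longleftrightarrow> zero i) \<and> (\<forall>i. inc i \<longrightarrow> v i < v (Suc i)) \<and>
     (\<forall>i. dec i \<longrightarrow> v (Suc i) < v i) \<and> (\<forall>i. \<not> inc i \<longrightarrow> \<not> dec i \<longrightarrow> v (Suc i) = v i)"

lemma realises_counter_exists:
  fixes zero inc dec :: "nat \<Rightarrow> bool"
  assumes inc_nonzero: "\<And>i. inc i \<Longrightarrow> \<not> zero (Suc i)"
    and dec_nonzero: "\<And>i. dec i \<Longrightarrow> \<not> zero i"
    and not_both: "\<And>i. \<not> (inc i \<and> dec i)"
    and frame: "\<And>i. \<not> inc i \<Longrightarrow> \<not> dec i \<Longrightarrow> zero (Suc i) = zero i"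
    and inc_often: "infinite {i. dec i} \<Longrightarrow> infinite {i. inc i}"
  shows "\<exists>v. realises_counter zero inc dec v"
proof -
  txt \<open>A nonzero value is one more than the number of decrements that will occur, before the
    next increment, without reaching zero, plus the number of increments so far: the first
    summand drops at every decrement, the second grows at every increment.\<close>
  define D where "D i = {j. i \<le> j \<and> dec j \<and> \<not> zero (Suc j) \<and> (\<forall>k\<in>{i..j}. \<not> inc k)}" for i
  define E where "E i = card {k. k < i \<and> inc k}" for i
  define v where "v i = (if zero i then 0 else Suc (card (D i) + E i))" for i
  have finite_D: "finite (D i)" for i
  proof (cases "finite {j. dec j}")
    case True
    then show ?thesis by (rule finite_subset[rotated]) (auto simp: D_def)
  next
    case False
    then obtain m where "i \<le> m" "inc m"
      using inc_often by (auto simp: infinite_nat_iff_unbounded_le)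
    then have "D i \<subseteq> {..<m}" by (auto simp: D_def not_less)
    then show ?thesis by (rule finite_subset) simp
  qed
  have E_Suc: "E (Suc i) = E i + (if inc i then 1 else 0)" for i
  proof -
    have "{k. k < Suc i \<and> inc k} =
        (if inc i then insert i {k. k < i \<and> inc k} else {k. k < i \<and> inc k})"
      by (auto simp: less_Suc_eq)
    then show ?thesis by (simp add: E_def)
  qed
  have D_step: "D i = (if dec i \<and> \<not> zero (Suc i) then insert i (D (Suc i)) else D (Suc i))"
    if "\<not> inc i" for i
  proof -
    have "j \<in> D i \<longleftrightarrow> (j = i \<and> dec i \<and> \<not> zero (Suc i)) \<or> j \<in> D (Suc i)" for j
    proof (cases "i < j")
      case True
      then have "{i..j} = insert i {Suc i..j}" by (simp add: atLeastAtMost_insertL)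
      then show ?thesis using True that by (auto simp: D_def Suc_le_eq)
    qed (auto simp: D_def that)
    then show ?thesis by auto
  qed
  have "realises_counter zero inc dec v"
    unfolding realises_counter_def
  proof (intro conjI allI impI)
    show "v i = 0 \<longleftrightarrow> zero i" for i by (simp add: v_def)
  next
    fix i assume "inc i"
    then have "D i = {}" by (auto simp: D_def)
    then show "v i < v (Suc i)" using \<open>inc i\<close> inc_nonzero E_Suc[of i] by (simp add: v_def)
  next
    fix i assume "dec i"
    have "i \<notin> D (Suc i)" by (simp add: D_def)
    then show "v (Suc i) < v i"
      using \<open>dec i\<close> dec_nonzero not_both D_step[of i] E_Suc[of i] finite_D[of "Suc i"]
      by (auto simp: v_def)
  next
    fix i assume "\<not> inc i" "\<not> dec i"
    then show "v (Suc i) = v i" using frame D_step[of i] E_Suc[of i] by (simp add: v_def)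
  qed
  then show ?thesis by blast
qed

lemma inj_tr_lit: "inj tr_lit"
proof (rule injI)
  fix l l' :: "('f, 'v) lit"
  show "tr_lit l = tr_lit l' \<Longrightarrow> l = l'" by (cases l; cases l') auto
qed

lemma tr_lit_image_True_iff:
  shows "(Inl p, True) \<in> tr_lit ` A \<longleftrightarrow> Atom p \<in> A"
    and "(Inr X, True) \<in> tr_lit ` A \<longleftrightarrow> Eq0 X \<in> A"
  by (metis inj_image_mem_iff inj_tr_lit tr_lit.simps)+

lemma fond_init_bar: "q_init Q s \<Longrightarrow> fond_init (T_D Q) (bar s)"
  by (auto simp: fond_init_def q_init_def T_D_def bar_def tr_lit_image_True_iff split: sum.split)

lemma fond_applicable_bar:
  assumes "q_applicable Q a s"
  shows "fond_applicable (T_D Q) a (bar s)"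
  unfolding fond_applicable_def
proof (intro conjI ballI)
  show "a \<in> fO (T_D Q)" using assms by (simp add: q_applicable_def T_D_def)
next
  fix xv assume "xv \<in> fPre (T_D Q) a"
  then obtain l where "l \<in> qPre Q a" and "xv = tr_lit l" by (auto simp: T_D_def)
  moreover from this have "holds s l" using assms by (simp add: q_applicable_def sat_def)
  ultimately show "case xv of (x, v) \<Rightarrow> bar s x = v" by (cases l) (auto simp: bar_def)
qed

lemma fond_succ_bar:
  assumes "valid_state s" and "q_succ Q a s s'"
  shows "fond_succ (T_D Q) a (bar s) (bar s')"
  unfolding fond_succ_def
proof
  fix x
  show "case fEff (T_D Q) a x of None \<Rightarrow> bar s' x = bar s x | Some S \<Rightarrow> bar s' x \<in> S"
  proof (cases x)
    case (Inl p)
    then show ?thesis using assms(2) by (auto simp: T_D_def bar_def q_succ_def apply_peff_def)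
  next
    case (Inr X)
    have "0 \<le> snd s X" using assms(1) by (simp add: valid_state_def)
    then show ?thesis using assms(2) Inr by (auto simp: T_D_def bar_def q_succ_def)
  qed
qed

lemma q_inf_traj_valid_state:
  assumes "q_inf_traj Q \<pi> s a"
  shows "valid_state (s i)"
  using assms by (cases i) (auto simp: q_inf_traj_def q_init_def q_succ_def)

lemma fond_inf_traj_bar:
  assumes "q_inf_traj Q \<pi> s a"
  shows "fond_inf_traj (T_D Q) \<pi> (\<lambda>i. bar (s i))"
  using assms q_inf_traj_valid_state[OF assms]
  by (auto simp: q_inf_traj_def fond_inf_traj_def
      intro: fond_init_bar fond_applicable_bar fond_succ_bar)

lemma q_init_of_fond_init:
  assumes "fond_init (T_D Q) b" and "\<And>X. w X = 0 \<longleftrightarrow> b (Inr X)" and "\<And>X. 0 \<le> w X"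
  shows "q_init Q (\<lambda>p. b (Inl p), w)"
  using assms by (auto simp: fond_init_def q_init_def valid_state_def T_D_def tr_lit_image_True_iff)

lemma q_applicable_of_fond_applicable:
  assumes "fond_applicable (T_D Q) a b" and "\<And>X. w X = 0 \<longleftrightarrow> b (Inr X)" and "\<And>X. 0 \<le> w X"
  shows "q_applicable Q a (\<lambda>p. b (Inl p), w)"
  unfolding q_applicable_def sat_def
proof (intro conjI ballI)
  show "a \<in> qO Q" using assms(1) by (simp add: fond_applicable_def T_D_def)
next
  fix l assume "l \<in> qPre Q a"
  then have "b (fst (tr_lit l)) = snd (tr_lit l)"
    using assms(1) by (force simp: fond_applicable_def T_D_def)
  then show "holds (\<lambda>p. b (Inl p), w) l"
    using assms(2,3) by (cases l) (auto simp: less_le)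
qed

lemma fond_succ_T_D_effects:
  assumes "fond_succ (T_D Q) a b b'"
  shows "(\<lambda>p. b' (Inl p)) = apply_peff (qEff Q a) (\<lambda>p. b (Inl p))"
    and "Inc X \<in> qN Q a \<Longrightarrow> \<not> b' (Inr X)"
    and "Inc X \<notin> qN Q a \<Longrightarrow> Dec X \<notin> qN Q a \<Longrightarrow> b' (Inr X) = b (Inr X)"
proof -
  have eff: "case fEff (T_D Q) a x of None \<Rightarrow> b' x = b x | Some S \<Rightarrow> b' x \<in> S" for x
    using assms by (simp add: fond_succ_def)
  show "(\<lambda>p. b' (Inl p)) = apply_peff (qEff Q a) (\<lambda>p. b (Inl p))"
  proof
    fix p show "b' (Inl p) = apply_peff (qEff Q a) (\<lambda>p. b (Inl p)) p"
      using eff[of "Inl p"] by (auto simp: T_D_def apply_peff_def split: if_splits)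
  qed
  show "Inc X \<in> qN Q a \<Longrightarrow> \<not> b' (Inr X)"
    and "Inc X \<notin> qN Q a \<Longrightarrow> Dec X \<notin> qN Q a \<Longrightarrow> b' (Inr X) = b (Inr X)"
    using eff[of "Inr X"] by (auto simp: T_D_def)
qed

lemma fond_applicable_T_D_Dec_nonzero:
  assumes "wf_qnp Q" and "fond_applicable (T_D Q) a b" and "Dec X \<in> qN Q a"
  shows "\<not> b (Inr X)"
proof -
  have "Gt0 X \<in> qPre Q a"
    using assms by (auto simp: wf_qnp_def fond_applicable_def T_D_def)
  then show ?thesis using assms(2) by (force simp: fond_applicable_def T_D_def)
qed

lemma q_inf_traj_not_terminating:
  fixes Q :: "('f::finite, 'v::finite, 'a) qnp"
  assumes traj: "q_inf_traj Q \<pi> s a"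
  shows "\<not> terminating_traj Q \<pi> (\<lambda>i. bar (s i))"
proof
  have policy: "\<pi> (bar (s i)) = Some (a i)" and succ: "q_succ Q (a i) (s i) (s (Suc i))" for i
    using traj by (auto simp: q_inf_traj_def)
  obtain \<epsilon> :: real where "0 < \<epsilon>" and eps: "\<And>X i. snd (s (Suc i)) X \<noteq> snd (s i) X \<Longrightarrow>
      \<epsilon> \<le> \<bar>snd (s (Suc i)) X - snd (s i) X\<bar> \<or>
      (0 = snd (s (Suc i)) X \<and> snd (s (Suc i)) X < snd (s i) X \<and> snd (s i) X < \<epsilon>)"
    using traj unfolding q_inf_traj_def by blast
  assume "terminating_traj Q \<pi> (\<lambda>i. bar (s i))"
  then obtain X where Dec_infinite: "infinite {i. Dec X \<in> qN Q (a i)}"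
    and "finite {i. Inc X \<in> qN Q (a i)}"
    using terminating_traj_iff_actions[of \<pi> "\<lambda>i. bar (s i)" a] policy by blast
  then obtain N where no_Inc: "\<And>i. N \<le> i \<Longrightarrow> Inc X \<notin> qN Q (a i)"
    by (metis finite_nat_set_iff_bounded mem_Collect_eq not_less)
  define f where "f i = snd (s i) X" for i
  have "finite {i. f (Suc i) < f i}"
  proof (rule finite_decreases)
    show "0 \<le> f i" for i
      using q_inf_traj_valid_state[OF traj] by (simp add: f_def valid_state_def)
    show "f (Suc i) \<le> f i" if "N \<le> i" for i
      using succ[of i] no_Inc[OF that] by (force simp: q_succ_def f_def)
    show "\<epsilon> \<le> f i - f (Suc i) \<or> f (Suc i) = 0" if "f (Suc i) < f i" for i
      using eps[of i X] that by (auto simp: f_def)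
  qed fact
  moreover have "{i. Dec X \<in> qN Q (a i)} \<subseteq> {i. f (Suc i) < f i}"
    using succ by (auto simp: q_succ_def f_def)
  ultimately show False using Dec_infinite finite_subset by blast
qed

lemma q_inf_traj_of_nonterminating:
  fixes Q :: "('f::finite, 'v::finite, 'a) qnp"
  assumes wf: "wf_qnp Q" and traj: "fond_inf_traj (T_D Q) \<pi> b"
    and nonterm: "\<not> terminating_traj Q \<pi> b"
  shows "\<exists>s a. q_inf_traj Q \<pi> s a"
proof -
  obtain act where policy: "\<And>i. \<pi> (b i) = Some (act i)"
    and app: "\<And>i. fond_applicable (T_D Q) (act i) (b i)"
    and succ: "\<And>i. fond_succ (T_D Q) (act i) (b i) (b (Suc i))"
    using traj unfolding fond_inf_traj_def by metis
  have "\<exists>w. realises_counter (\<lambda>i. b i (Inr X))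
      (\<lambda>i. Inc X \<in> qN Q (act i)) (\<lambda>i. Dec X \<in> qN Q (act i)) w" for X
  proof (rule realises_counter_exists)
    show "\<not> (Inc X \<in> qN Q (act i) \<and> Dec X \<in> qN Q (act i))" for i
      using wf app[of i] by (auto simp: wf_qnp_def fond_applicable_def T_D_def)
    show "infinite {i. Inc X \<in> qN Q (act i)}" if "infinite {i. Dec X \<in> qN Q (act i)}"
      using nonterm terminating_traj_iff_actions[of \<pi> b act] policy that by blast
  qed (use fond_succ_T_D_effects(2,3)[OF succ] fond_applicable_T_D_Dec_nonzero[OF wf app]
      in auto)
  then obtain v where v: "\<And>X. realises_counter (\<lambda>i. b i (Inr X))
      (\<lambda>i. Inc X \<in> qN Q (act i)) (\<lambda>i. Dec X \<in> qN Q (act i)) (v X)"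
    by metis
  then have v_zero: "v X i = 0 \<longleftrightarrow> b i (Inr X)" for X i
    by (simp add: realises_counter_def)
  define s where "s i = (\<lambda>p. b i (Inl p), \<lambda>X. real (v X i))" for i
  have bar_s: "bar (s i) = b i" for i
    by (rule ext) (auto simp: bar_def s_def v_zero split: sum.split)
  have "q_inf_traj Q \<pi> s act"
    unfolding q_inf_traj_def
  proof (intro conjI allI exI[of _ 1])
    show "q_init Q (s 0)"
      unfolding s_def using traj by (intro q_init_of_fond_init) (auto simp: fond_inf_traj_def v_zero)
    show "\<pi> (bar (s i)) = Some (act i)" for i by (simp add: bar_s policy)
    show "q_applicable Q (act i) (s i)" for i
      unfolding s_def by (intro q_applicable_of_fond_applicable app) (auto simp: v_zero)
    show "q_succ Q (act i) (s i) (s (Suc i))" for i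
      using fond_succ_T_D_effects(1)[OF succ] v
      by (auto simp: q_succ_def s_def valid_state_def realises_counter_def)
  qed (auto simp: s_def)
  then show ?thesis by blast
qed

theorem theorem4:
  fixes Q :: "('f::finite, 'v::finite, 'a) qnp"
    and \<pi> :: "('f, 'v, 'a) policy"
  assumes "wf_qnp Q"
  shows "Q_terminating Q \<pi> \<longleftrightarrow> P_terminating Q \<pi>"
  using fond_inf_traj_bar q_inf_traj_not_terminating q_inf_traj_of_nonterminating[OF assms]
  unfolding Q_terminating_def P_terminating_def by blast

end
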